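(* There exist constants $c>0$ and $K>0$ such that for every positive integer $n$ there exists a divisor $m$ of $n$ with $m\ge n^{c/\log\log\log n}$ and $\sigma(m)\le K m$.
   Context: $\sigma(m)$ is the sum of the positive divisors of $m$. Convention: $\log x$ denotes $\max(\ln x,1)$. *)

theory Defs
  imports Complex_Main
begin

text \<open>Paper convention: log x denotes max(ln x, 1).\<close>
definition Log :: "real \<Rightarrow> real" where
  "Log x = max (ln x) 1"

definition sigma :: "nat \<Rightarrow> nat" where
  "sigma m = (\<Sum>d\<in>{d. d dvd m}. d)"

end

theory Submission
  imports Defs "HOL-Computational_Algebra.Primes"
begin

text \<open>
  Split the prime factors of \<open>n\<close> into those exceeding \<open>L = max (ln n) 3\<close> and, below \<open>L\<close>,
  the blocks \<open>2^2^t < p \<le> 2^2^(t+1)\<close>; there are \<open>O(log log log n)\<close> classes. Each class has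
  \<open>\<Sum> 1/p = O(1)\<close>: fewer than \<open>L\<close> prime divisors of \<open>n\<close> exceed \<open>L\<close>, and a block carries
  reciprocal sum \<open>O(1)\<close> by Chebyshev's bound \<open>\<Prod>{p prime. N < p \<le> 2N} \<le> 4^N\<close>.
  The part of \<open>n\<close> supported on some class is at least \<open>n^(1/#classes)\<close>, and since
  \<open>\<sigma>(m)/m \<le> exp (2 \<Sum>{1/p. p prime, p dvd m})\<close> its abundancy is bounded.
\<close>

section \<open>The divisor sum\<close>

lemma sigma_one: "sigma 1 = 1"
  unfolding sigma_def by simp

lemma sigma_mult_le:
  assumes "x > 0" "y > 0"
  shows "sigma (x * y) \<le> sigma x * sigma y"
proof -
  let ?D = "\<lambda>z::nat. {d. d dvd z}"
  have fin: "finite (?D x \<times> ?D y)" using assms by simp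
  have sub: "?D (x * y) \<subseteq> (\<lambda>(a, b). a * b) ` (?D x \<times> ?D y)"
  proof
    fix d assume "d \<in> ?D (x * y)"
    then obtain a b where "d = a * b" "a dvd x" "b dvd y" using division_decomp by blast
    then show "d \<in> (\<lambda>(a, b). a * b) ` (?D x \<times> ?D y)" by auto
  qed
  have "sigma (x * y) = sum id (?D (x * y))" unfolding sigma_def by simp
  also have "\<dots> \<le> sum id ((\<lambda>(a, b). a * b) ` (?D x \<times> ?D y))"
    by (rule sum_mono2) (use fin sub in auto)
  also have "\<dots> \<le> sum (id \<circ> (\<lambda>(a, b). a * b)) (?D x \<times> ?D y)"
    by (rule sum_image_le) (use fin in auto)
  also have "\<dots> = sigma x * sigma y"
    unfolding sigma_def by (simp add: case_prod_beta comp_def sum_product sum.cartesian_product)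
  finally show ?thesis .
qed

lemma geometric_sum_le:
  fixes p :: real
  assumes "p > 1"
  shows "(\<Sum>i\<le>a. p ^ i) \<le> p ^ a * (p / (p - 1))"
proof (induction a)
  case 0
  then show ?case using assms by (simp add: field_simps)
next
  case (Suc a)
  then have "(\<Sum>i\<le>Suc a. p ^ i) \<le> p ^ a * (p / (p - 1)) + p ^ Suc a" by simp
  also have "\<dots> = p ^ Suc a * (p / (p - 1))" using assms by (simp add: field_simps)
  finally show ?case .
qed

lemma sigma_prime_power_le:
  assumes "prime p"
  shows "real (sigma (p ^ a)) \<le> real p ^ a * exp (2 / real p)"
proof -
  have p2: "p \<ge> 2" using assms prime_ge_2_nat by blast
  have "{d. d dvd p ^ a} = (\<lambda>i. p ^ i) ` {..a}"
    using divides_primepow_nat[OF assms] by auto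
  moreover have "inj_on (\<lambda>i. p ^ i) {..a}"
    using p2 by (auto intro!: inj_onI simp: power_inject_exp)
  ultimately have "real (sigma (p ^ a)) = (\<Sum>i\<le>a. real p ^ i)"
    unfolding sigma_def by (simp add: sum.reindex)
  also have "\<dots> \<le> real p ^ a * (real p / (real p - 1))"
    by (rule geometric_sum_le) (use p2 in simp)
  also have "\<dots> \<le> real p ^ a * exp (2 / real p)"
  proof (rule mult_left_mono)
    have "real p / (real p - 1) \<le> 1 + 2 / real p" using p2 by (simp add: field_simps)
    also have "\<dots> \<le> exp (2 / real p)" by (rule exp_ge_add_one_self)
    finally show "real p / (real p - 1) \<le> exp (2 / real p)" .
  qed simp
  finally show ?thesis .
qed

lemma sigma_prod_prime_powers_le:
  assumes "finite S" "\<And>p. p \<in> S \<Longrightarrow> prime p"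
  shows "real (sigma (\<Prod>p\<in>S. p ^ e p))
           \<le> real (\<Prod>p\<in>S. p ^ e p) * exp (2 * (\<Sum>p\<in>S. 1 / real p))"
  using assms
proof (induction S rule: finite_induct)
  case empty
  then show ?case using sigma_one by simp
next
  case (insert q S)
  let ?m = "\<Prod>p\<in>S. p ^ e p"
  have q: "prime q" using insert by simp
  have pos: "?m > 0" using insert by (auto intro!: prod_pos simp: prime_gt_0_nat)
  have "real (sigma (\<Prod>p\<in>insert q S. p ^ e p)) = real (sigma (q ^ e q * ?m))"
    using insert by simp
  also have "\<dots> \<le> real (sigma (q ^ e q)) * real (sigma ?m)"
    using sigma_mult_le[OF _ pos, of "q ^ e q"] q prime_gt_0_nat
    by (metis of_nat_le_iff of_nat_mult zero_less_power)
  also have "\<dots> \<le> (real q ^ e q * exp (2 / real q)) * (real ?m * exp (2 * (\<Sum>p\<in>S. 1 / real p)))"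
    by (rule mult_mono[OF sigma_prime_power_le[OF q]]) (use insert in auto)
  also have "\<dots> = real (\<Prod>p\<in>insert q S. p ^ e p) * exp (2 * (\<Sum>p\<in>insert q S. 1 / real p))"
    using insert by (simp add: exp_add[symmetric] algebra_simps add_divide_distrib)
  finally show ?case .
qed

section \<open>Reciprocal sums of primes\<close>

lemma prod_primes_dvd:
  fixes x :: nat
  assumes "finite A" "\<And>p. p \<in> A \<Longrightarrow> prime p \<and> p dvd x"
  shows "(\<Prod>p\<in>A. p) dvd x"
  using assms
proof (induction A rule: finite_induct)
  case (insert q A)
  have "coprime q (\<Prod>p\<in>A. p)"
    by (rule prod_coprime_right) (use insert in \<open>auto intro: primes_coprime\<close>)
  then show ?case using insert by (simp add: divides_mult)
qed simp

lemma sum_inverse_large_prime_divisors_le_1: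
  fixes n :: nat and L :: real
  assumes "n > 0" "L \<ge> 3" "ln (real n) \<le> L" "finite Q"
    and Q: "\<And>p. p \<in> Q \<Longrightarrow> prime p \<and> p dvd n \<and> L < real p"
  shows "(\<Sum>p\<in>Q. 1 / real p) \<le> 1"
proof -
  define k where "k = card Q"
  have "(\<Prod>p\<in>Q. p) \<le> n"
    using prod_primes_dvd[OF \<open>finite Q\<close>] Q \<open>n > 0\<close> by (simp add: dvd_imp_le)
  then have prod_le: "(\<Prod>p\<in>Q. real p) \<le> real n"
    by (simp only: of_nat_prod[symmetric] of_nat_le_iff)
  have "exp (real k) = exp 1 ^ k" using exp_of_nat_mult[of k 1] by simp
  also have "\<dots> \<le> L ^ k" by (rule power_mono) (use exp_le assms in auto)
  also have "\<dots> = (\<Prod>p\<in>Q. L)" by (simp add: k_def)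
  also have "\<dots> \<le> (\<Prod>p\<in>Q. real p)" by (rule prod_mono) (use assms in \<open>auto dest!: Q\<close>)
  finally have "exp (real k) \<le> real n" using prod_le by linarith
  then have "real k \<le> L"
    using assms(1,3) ln_le_cancel_iff[of "exp (real k)" "real n"] by simp
  have "(\<Sum>p\<in>Q. 1 / real p) \<le> (\<Sum>p\<in>Q. 1 / L)"
    by (rule sum_mono) (use assms in \<open>auto dest!: Q intro!: divide_left_mono\<close>)
  also have "\<dots> = real k / L" by (simp add: k_def)
  also have "\<dots> \<le> 1" using \<open>real k \<le> L\<close> assms(2) by simp
  finally show ?thesis .
qed

lemma prod_primes_between_le_four_power:
  "(\<Prod>p | prime p \<and> N < p \<and> p \<le> 2 * N. p) \<le> 4 ^ N"
proof -
  let ?C = "(2 * N) choose N"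
  have fl: "fact N * fact N * ?C = fact (2 * N)"
    using binomial_fact_lemma[of N "2 * N"] by simp
  have "p dvd ?C" if "prime p" "N < p" "p \<le> 2 * N" for p
  proof -
    have "p dvd fact N * fact N * ?C" using that fl prime_dvd_fact_iff by metis
    moreover have "\<not> p dvd fact N" using that prime_dvd_fact_iff by auto
    ultimately show ?thesis using that(1) by (simp add: prime_dvd_mult_iff)
  qed
  then have "(\<Prod>p | prime p \<and> N < p \<and> p \<le> 2 * N. p) \<le> ?C"
    by (intro dvd_imp_le prod_primes_dvd) auto
  also have "?C \<le> (\<Sum>k\<le>2 * N. (2 * N) choose k)" by (rule member_le_sum) auto
  also have "\<dots> = 4 ^ N" by (simp add: choose_row_sum power_mult)
  finally show ?thesis .
qed

lemma sum_inverse_primes_dyadic_le: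
  assumes "j \<ge> 1"
  shows "(\<Sum>p | prime p \<and> 2 ^ j < p \<and> p \<le> 2 ^ (j + 1). 1 / real p) \<le> 2 / real j"
proof -
  define P where "P = {p::nat. prime p \<and> 2 ^ j < p \<and> p \<le> 2 ^ (j + 1)}"
  define c where "c = card P"
  have fin: "finite P" unfolding P_def by (rule finite_subset[of _ "{..2 ^ (j + 1)}"]) auto
  have "(2::nat) ^ (j * c) = (\<Prod>p\<in>P. 2 ^ j)" by (simp add: c_def power_mult)
  also have "\<dots> \<le> (\<Prod>p\<in>P. p)" by (rule prod_mono) (auto simp: P_def)
  also have "\<dots> \<le> 4 ^ 2 ^ j" using prod_primes_between_le_four_power[of "2 ^ j"] by (simp add: P_def)
  also have "\<dots> = 2 ^ (2 * 2 ^ j)" by (simp add: power_mult)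
  also have "\<dots> = 2 ^ 2 ^ (j + 1)" by simp
  finally have "j * c \<le> 2 ^ (j + 1)" by (rule power_le_imp_le_exp[rotated]) simp
  then have jc: "real j * real c \<le> 2 * 2 ^ j"
    by (metis of_nat_le_iff of_nat_mult of_nat_numeral of_nat_power power_Suc Suc_eq_plus1)
  have "(\<Sum>p\<in>P. 1 / real p) \<le> (\<Sum>p\<in>P. 1 / 2 ^ j)"
    by (rule sum_mono) (auto simp: P_def frac_le)
  also have "\<dots> = real c / 2 ^ j" by (simp add: c_def)
  also have "\<dots> \<le> 2 / real j" using jc assms by (simp add: field_simps)
  finally show ?thesis by (simp add: P_def)
qed

lemma sum_inverse_primes_power_range_le:
  assumes "1 \<le> a" "a \<le> b"
  shows "(\<Sum>p | prime p \<and> 2 ^ a < p \<and> p \<le> 2 ^ b. 1 / real p) \<le> (\<Sum>j\<in>{a..<b}. 2 / real j)"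
  using assms(2)
proof (induction b rule: dec_induct)
  case base
  have "{p::nat. prime p \<and> 2 ^ a < p \<and> p \<le> 2 ^ a} = {}" by auto
  then show ?case by (subst \<open>_ = {}\<close>) simp
next
  case (step n)
  let ?P = "\<lambda>u v. {p::nat. prime p \<and> u < p \<and> p \<le> v}"
  have le: "(2::nat) ^ a \<le> 2 ^ n" using step(1) by (simp add: power_increasing)
  have split: "?P (2 ^ a) (2 ^ Suc n) = ?P (2 ^ a) (2 ^ n) \<union> ?P (2 ^ n) (2 ^ (n + 1))"
    by (auto intro: le_less_trans[OF le])
  have fin: "finite (?P u v)" for u v by (rule finite_subset[of _ "{..v}"]) auto
  have "(\<Sum>p\<in>?P (2 ^ a) (2 ^ Suc n). 1 / real p)
          = (\<Sum>p\<in>?P (2 ^ a) (2 ^ n). 1 / real p) + (\<Sum>p\<in>?P (2 ^ n) (2 ^ (n + 1)). 1 / real p)"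
    unfolding split by (rule sum.union_disjoint[OF fin fin]) auto
  also have "\<dots> \<le> (\<Sum>j\<in>{a..<n}. 2 / real j) + 2 / real n"
    by (rule add_mono[OF step(3) sum_inverse_primes_dyadic_le]) (use step(1) assms in auto)
  also have "\<dots> = (\<Sum>j\<in>{a..<Suc n}. 2 / real j)" using step(1) by simp
  finally show ?case .
qed

lemma sum_inverse_primes_double_exp_block_le:
  "(\<Sum>p | prime p \<and> 2 ^ 2 ^ t < p \<and> p \<le> 2 ^ 2 ^ (t + 1). 1 / real p) \<le> 2"
proof -
  have "(\<Sum>p | prime p \<and> 2 ^ 2 ^ t < p \<and> p \<le> 2 ^ 2 ^ (t + 1). 1 / real p)
          \<le> (\<Sum>j\<in>{(2::nat) ^ t..<2 ^ (t + 1)}. 2 / real j)"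
    by (rule sum_inverse_primes_power_range_le) auto
  also have "\<dots> \<le> (\<Sum>j\<in>{(2::nat) ^ t..<2 ^ (t + 1)}. 2 / 2 ^ t)"
    by (rule sum_mono) (auto simp: frac_le)
  also have "\<dots> = 2" by simp
  finally show ?thesis .
qed

section \<open>Double-exponential blocks\<close>

definition block :: "nat \<Rightarrow> nat" where
  "block p = (LEAST t. p \<le> 2 ^ 2 ^ (t + 1))"

lemma le_double_exp_block: "p \<le> 2 ^ 2 ^ (block p + 1)"
proof -
  have "p < 2 ^ (p + 1)" using less_exp[of p] by (simp del: less_exp)
  also have "\<dots> < 2 ^ 2 ^ (p + 1)" by (rule power_strict_increasing[OF less_exp]) simp
  finally have "p \<le> 2 ^ 2 ^ (p + 1)" by (rule less_imp_le)
  then show ?thesis unfolding block_def by (rule LeastI)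
qed

lemma double_exp_less_of_block_Suc: "block p = Suc t \<Longrightarrow> 2 ^ 2 ^ Suc t < p"
  using not_less_Least[of t "\<lambda>t. p \<le> 2 ^ 2 ^ (t + 1)"] by (simp add: block_def)

lemma finite_block: "finite {p. block p = t}"
proof (rule finite_subset)
  show "{p. block p = t} \<subseteq> {..2 ^ 2 ^ (t + 1)}"
  proof
    fix p assume "p \<in> {p. block p = t}"
    then show "p \<in> {..2 ^ 2 ^ (t + 1)}" using le_double_exp_block[of p] by simp
  qed
qed simp

lemma sum_inverse_primes_block_le: "(\<Sum>p | prime p \<and> block p = t. 1 / real p) \<le> 5 / 2"
proof (cases t)
  case 0
  have "{p. prime p \<and> block p = t} \<subseteq> {2, 3}"
  proof
    fix p assume p: "p \<in> {p. prime p \<and> block p = t}"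
    then have "p \<le> 4" using le_double_exp_block[of p] 0 by simp
    moreover have "p \<noteq> 4" using p prime_product[of "2::nat" 2] by auto
    ultimately show "p \<in> {2, 3}" using p prime_ge_2_nat[of p] by auto
  qed
  then have "(\<Sum>p | prime p \<and> block p = t. 1 / real p) \<le> (\<Sum>p\<in>{2, 3}. 1 / real p)"
    by (intro sum_mono2) auto
  then show ?thesis by simp
next
  case (Suc s)
  have "{p. prime p \<and> block p = t} \<subseteq> {p. prime p \<and> 2 ^ 2 ^ t < p \<and> p \<le> 2 ^ 2 ^ (t + 1)}"
  proof
    fix p assume "p \<in> {p. prime p \<and> block p = t}"
    then show "p \<in> {p. prime p \<and> 2 ^ 2 ^ t < p \<and> p \<le> 2 ^ 2 ^ (t + 1)}"
      using le_double_exp_block[of p] double_exp_less_of_block_Suc[of p s] Suc by simp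
  qed
  moreover have "finite {p::nat. prime p \<and> 2 ^ 2 ^ t < p \<and> p \<le> 2 ^ 2 ^ (t + 1)}"
    by (rule finite_subset[of _ "{..2 ^ 2 ^ (t + 1)}"]) auto
  ultimately have "(\<Sum>p | prime p \<and> block p = t. 1 / real p)
          \<le> (\<Sum>p | prime p \<and> 2 ^ 2 ^ t < p \<and> p \<le> 2 ^ 2 ^ (t + 1). 1 / real p)"
    by (intro sum_mono2) auto
  also have "\<dots> \<le> 2" by (rule sum_inverse_primes_double_exp_block_le)
  finally show ?thesis by simp
qed

lemma exp_half_le_2: "exp (1 / 2 :: real) \<le> 2"
proof -
  have "exp (1 / 2 :: real) ^ 2 = exp 1" by (simp add: power2_eq_square flip: exp_add)
  also have "\<dots> \<le> 2 ^ 2" using exp_le by simp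
  finally show ?thesis by (rule power2_le_imp_le) simp
qed

lemma exp_half_mult_le_two_power: "exp (real k / 2) \<le> (2::real) ^ k"
proof -
  have "exp (real k / 2) = exp (1 / 2) ^ k" using exp_of_nat_mult[of k "1 / 2"] by simp
  also have "\<dots> \<le> 2 ^ k" by (rule power_mono[OF exp_half_le_2]) simp
  finally show ?thesis .
qed

lemma le_ln_ln_of_double_exp_less:
  assumes "(2::real) ^ 2 ^ t < x"
  shows "real t \<le> 2 * ln (ln x) + 2"
proof -
  have "x > 0" using assms by (smt (verit) zero_less_power)
  have "exp (real (2 ^ t) / 2) < exp (ln x)"
    using exp_half_mult_le_two_power[of "2 ^ t"] assms \<open>x > 0\<close> by simp
  then have "real (2 ^ t) / 2 < ln x" by simp
  moreover have "exp (real t / 2) \<le> real (2 ^ t)" using exp_half_mult_le_two_power[of t] by simp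
  ultimately have h: "exp (real t / 2) / 2 < ln x" by simp
  have "real t / 2 - ln 2 = ln (exp (real t / 2) / 2)" by (simp add: ln_div)
  also have "\<dots> < ln (ln x)"
  proof -
    have "0 < ln x" using h exp_gt_zero[of "real t / 2"] by linarith
    then show ?thesis using h by (subst ln_less_cancel_iff) auto
  qed
  finally show ?thesis using ln_2_less_1 by simp
qed

lemma ln_ln_ln_le_Log_Log_Log:
  assumes "ln x > 4"
  shows "ln (ln (ln x)) \<le> Log (Log (Log x))"
proof -
  have "exp 1 \<le> (4::real)" using exp_le by simp
  then have "ln (exp 1) < ln (ln x)" using assms by (subst ln_less_cancel_iff) auto
  then have "ln (ln x) > 1" by simp
  moreover have "Log x = ln x" unfolding Log_def using assms by simp
  ultimately show ?thesis unfolding Log_def by simp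
qed

lemma block_le_Log_Log_Log:
  assumes "real p \<le> max (ln x) 3"
  shows "real (block p) \<le> 2 * Log (Log (Log x)) + 2"
proof (cases "block p")
  case 0
  then show ?thesis by (simp add: Log_def)
next
  case (Suc s)
  have p: "(2::real) ^ 2 ^ Suc s < real p"
    using double_exp_less_of_block_Suc[OF Suc] by (metis of_nat_less_iff of_nat_numeral of_nat_power)
  moreover have "(4::real) \<le> 2 ^ 2 ^ Suc s"
    using power_increasing[of 2 "2 ^ Suc s" "2::real"] by simp
  ultimately have "real p > 4" by linarith
  then have "real p \<le> ln x" using assms by (simp add: max_def split: if_splits)
  then have lt: "(2::real) ^ 2 ^ Suc s < ln x" and "ln x > 4"
    using p \<open>real p > 4\<close> by linarith+
  have "real (Suc s) \<le> 2 * ln (ln (ln x)) + 2" by (rule le_ln_ln_of_double_exp_less[OF lt])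
  also have "\<dots> \<le> 2 * Log (Log (Log x)) + 2"
    using ln_ln_ln_le_Log_Log_Log[OF \<open>ln x > 4\<close>] by simp
  finally show ?thesis using Suc by simp
qed

section \<open>Classes of prime factors\<close>

definition prime_class :: "real \<Rightarrow> nat \<Rightarrow> nat" where
  "prime_class L p = (if L < real p then 0 else Suc (block p))"

definition factor_part :: "(nat \<Rightarrow> bool) \<Rightarrow> nat \<Rightarrow> nat" where
  "factor_part P n = (\<Prod>p\<in>{p \<in> prime_factors n. P p}. p ^ multiplicity p n)"

lemma factor_part_pos: "factor_part P n > 0"
  unfolding factor_part_def by (auto intro!: prod_pos simp: prime_factors_multiplicity prime_gt_0_nat)

lemma factor_part_dvd: "n > 0 \<Longrightarrow> factor_part P n dvd n"
  unfolding factor_part_def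
  by (subst (2) prime_factorization_nat) (auto intro: prod_dvd_prod_subset)

lemma prod_factor_part_fibres:
  assumes "n > 0"
  shows "n = (\<Prod>y\<in>g ` prime_factors n. factor_part (\<lambda>p. g p = y) n)"
  using prime_factorization_nat[OF assms] prod.image_gen[of "prime_factors n" "\<lambda>p. p ^ multiplicity p n" g]
  unfolding factor_part_def by simp

lemma sigma_factor_part_le:
  "real (sigma (factor_part P n))
     \<le> real (factor_part P n) * exp (2 * (\<Sum>p | p \<in> prime_factors n \<and> P p. 1 / real p))"
  unfolding factor_part_def by (rule sigma_prod_prime_powers_le) auto

lemma sum_inverse_prime_class_le:
  assumes "n > 0" "L \<ge> 3" "ln (real n) \<le> L"
  shows "(\<Sum>p | p \<in> prime_factors n \<and> prime_class L p = y. 1 / real p) \<le> 5 / 2"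
proof (cases y)
  case 0
  have "(\<Sum>p | p \<in> prime_factors n \<and> prime_class L p = y. 1 / real p) \<le> 1"
    by (rule sum_inverse_large_prime_divisors_le_1[OF assms])
       (use 0 in \<open>auto simp: prime_class_def split: if_splits\<close>)
  then show ?thesis by simp
next
  case (Suc t)
  have "(\<Sum>p | p \<in> prime_factors n \<and> prime_class L p = y. 1 / real p)
          \<le> (\<Sum>p | prime p \<and> block p = t. 1 / real p)"
    by (intro sum_mono2 finite_subset[OF _ finite_block[of t]])
       (use Suc in \<open>auto simp: prime_class_def split: if_splits\<close>)
  also have "\<dots> \<le> 5 / 2" by (rule sum_inverse_primes_block_le)
  finally show ?thesis .
qed

lemma sigma_factor_part_prime_class_le:
  fixes n y :: nat
  assumes "n > 0"
  defines "m \<equiv> factor_part (\<lambda>p. prime_class (max (ln (real n)) 3) p = y) n"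
  shows "real (sigma m) \<le> exp 5 * real m"
proof -
  have "real (sigma m) \<le> real m * exp (2 * (\<Sum>p | p \<in> prime_factors n
                                    \<and> prime_class (max (ln (real n)) 3) p = y. 1 / real p))"
    unfolding m_def by (rule sigma_factor_part_le)
  also have "\<dots> \<le> real m * exp 5"
    using sum_inverse_prime_class_le[OF assms(1), of "max (ln (real n)) 3" y]
    by (intro mult_left_mono) simp_all
  finally show ?thesis by (simp add: mult.commute)
qed

lemma card_prime_class_image_le:
  "real (card (prime_class (max (ln x) 3) ` S)) \<le> 6 * Log (Log (Log x))"
proof -
  define B where "B = 2 * Log (Log (Log x)) + 3"
  have "B \<ge> 5" by (simp add: B_def Log_def)
  have "real (prime_class (max (ln x) 3) p) \<le> B" for p
    using block_le_Log_Log_Log[of p x] \<open>B \<ge> 5\<close>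
    by (cases "max (ln x) 3 < real p") (simp_all add: prime_class_def B_def not_less)
  then have "prime_class (max (ln x) 3) p \<le> nat \<lfloor>B\<rfloor>" for p
    by (simp add: le_nat_floor)
  then have "card (prime_class (max (ln x) 3) ` S) \<le> card {..nat \<lfloor>B\<rfloor>}"
    by (intro card_mono) auto
  then have "real (card (prime_class (max (ln x) 3) ` S)) \<le> real (card {..nat \<lfloor>B\<rfloor>})"
    by (rule of_nat_mono)
  also have "\<dots> = real (nat \<lfloor>B\<rfloor>) + 1" by simp
  also have "\<dots> \<le> B + 1" using of_nat_floor[of B] \<open>B \<ge> 5\<close> by simp
  finally show ?thesis by (simp add: B_def Log_def)
qed

lemma exists_factor_ge_root:
  fixes M :: "'a \<Rightarrow> nat"
  assumes "finite Y" "Y \<noteq> {}" "\<And>y. M y > 0"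
  shows "\<exists>y\<in>Y. real (\<Prod>y\<in>Y. M y) powr (1 / real (card Y)) \<le> real (M y)"
proof (rule ccontr)
  assume contra: "\<not> ?thesis"
  have less: "ln (real (M y)) < ln (real (\<Prod>y\<in>Y. M y)) / real (card Y)" if "y \<in> Y" for y
  proof -
    have "real (M y) < real (\<Prod>y\<in>Y. M y) powr (1 / real (card Y))"
      using contra that by (auto simp: not_le)
    then have "ln (real (M y)) < ln (real (\<Prod>y\<in>Y. M y) powr (1 / real (card Y)))"
      by (rule ln_less_cancel_iff[THEN iffD2, rotated 2])
        (use assms(3) prod_pos[of Y "\<lambda>y. real (M y)"] in auto)
    then show ?thesis by simp
  qed
  have "ln (real (\<Prod>y\<in>Y. M y)) = (\<Sum>y\<in>Y. ln (real (M y)))"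
    using assms(3) by (simp add: ln_prod[OF assms(1)] of_nat_prod)
  also have "\<dots> < (\<Sum>y\<in>Y. ln (real (\<Prod>y\<in>Y. M y)) / real (card Y))"
    by (rule sum_strict_mono[OF assms(1,2) less])
  also have "\<dots> = ln (real (\<Prod>y\<in>Y. M y))" using assms(1,2) by simp
  finally show False by simp
qed

lemma exists_divisor_large_bounded_abundancy:
  assumes "n > 0"
  shows "\<exists>m. m dvd n \<and> real n powr ((1 / 6) / Log (Log (Log (real n)))) \<le> real m \<and>
             real (sigma m) \<le> exp 5 * real m"
proof (cases "n = 1")
  case True
  then show ?thesis using sigma_one by (intro exI[of _ 1]) simp
next
  case False
  define L where "L = max (ln (real n)) 3"
  define Y where "Y = prime_class L ` prime_factors n"
  define M where "M y = factor_part (\<lambda>p. prime_class L p = y) n" for y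
  have n_eq: "n = (\<Prod>y\<in>Y. M y)"
    unfolding Y_def M_def by (rule prod_factor_part_fibres[OF assms])
  have "finite Y" by (simp add: Y_def)
  have "Y \<noteq> {}"
  proof
    assume "Y = {}"
    then show False using n_eq False by simp
  qed
  have "\<exists>y\<in>Y. real (\<Prod>y\<in>Y. M y) powr (1 / real (card Y)) \<le> real (M y)"
    by (rule exists_factor_ge_root[OF \<open>finite Y\<close> \<open>Y \<noteq> {}\<close>]) (simp add: M_def factor_part_pos)
  then obtain y where y: "real n powr (1 / real (card Y)) \<le> real (M y)"
    unfolding n_eq[symmetric] by blast
  have card_Y: "real (card Y) \<le> 6 * Log (Log (Log (real n)))"
    unfolding Y_def L_def by (rule card_prime_class_image_le)
  have "card Y > 0" using \<open>finite Y\<close> \<open>Y \<noteq> {}\<close> by (simp add: card_gt_0_iff)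
  have "(1 / 6) / Log (Log (Log (real n))) = 1 / (6 * Log (Log (Log (real n))))" by simp
  also have "\<dots> \<le> 1 / real (card Y)"
    by (rule divide_left_mono[OF card_Y]) (use \<open>card Y > 0\<close> in \<open>simp_all add: Log_def\<close>)
  finally have "real n powr ((1 / 6) / Log (Log (Log (real n)))) \<le> real n powr (1 / real (card Y))"
    by (rule powr_mono) (use assms in simp)
  then have "real n powr ((1 / 6) / Log (Log (Log (real n)))) \<le> real (M y)"
    using y by (rule order.trans)
  moreover have "real (sigma (M y)) \<le> exp 5 * real (M y)"
    unfolding M_def L_def by (rule sigma_factor_part_prime_class_le[OF assms])
  moreover have "M y dvd n" unfolding M_def by (rule factor_part_dvd[OF assms])
  ultimately show ?thesis by blast
qed

theorem mainTheorem7: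
  shows "\<exists>c::real. c > 0 \<and> (\<exists>K::real. K > 0 \<and>
           (\<forall>n::nat. n > 0 \<longrightarrow>
              (\<exists>m::nat. m dvd n \<and>
                 real m \<ge> real n powr (c / Log (Log (Log (real n)))) \<and>
                 real (sigma m) \<le> K * real m)))"
  by (intro exI[of _ "1 / 6"] exI[of _ "exp 5"] conjI allI impI exists_divisor_large_bounded_abundancy)
    simp_all

end
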